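(* Let $Y$ be a solid vector space, let $(X,d)$ be a complete cone metric space over $Y$, and let $D\subseteq X$ and $T\colon D\to X$ be a mapping satisfying: (a) $d(Tx,T^2x)\preceq \lambda\, d(x,Tx)$ for all $x\in D$ with $Tx\in D$, where $0\le\lambda<1$; (b) there is $x_0\in D$ such that $\overline U(x_0,r)\subseteq D$, where $r=\frac{1}{1-\lambda}\,d(x_0,Tx_0)$. Then: (i) The Picard iteration $x_{n+1}=Tx_n$ ($n=0,1,2,\dots$) starting from $x_0$ is well defined (i.e. $x_n\in D$ for all $n$), remains in the closed ball $\overline U(x_0,r)$ and converges to a point $\xi\in\overline U(x_0,r)$. (ii) $d(x_n,\xi)\preceq \frac{\lambda^n}{1-\lambda}\, d(x_0,Tx_0)$ for all $n\ge 0$. (iii) $d(x_n,\xi)\preceq\frac{1}{1-\lambda}\,d(x_n,x_{n+1})$ for all $n\ge0$, and $d(x_n,\xi)\preceq \frac{\lambda}{1-\lambda}\,d(x_n,x_{n-1})$ for all $n\ge 1$. (iv) If at least one of the following conditions holds, then $\xi$ is a fixed point of $T$: (F1) $T$ is continuous at $\xi$; (F2) $T$ has a closed graph, i.e. $\{(x,Tx):x\in D\}$ is a closed subset of $D\times X$.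
   Context: Vector space with convergence: a real vector space $Y$ with a relation $\to$ between sequences in $Y$ and points of $Y$ (write $x_n\to x$, $x$ is "a limit"; uniqueness of limits is not assumed) such that (C1) $x_n\to x$, $y_n\to y$ imply $x_n+y_n\to x+y$; (C2) $x_n\to x$, $\lambda\in\mathbb R$ imply $\lambda x_n\to\lambda x$; (C3) $\lambda_n\to\lambda$ in $\mathbb R$, $x\in Y$ imply $\lambda_n x\to\lambda x$. A set $A\subseteq Y$ is open if $x_n\to x\in A$ implies $x_n\in A$ for all but finitely many $n$; closed if $x_n\to x$ and $x_n\in A$ for all $n$ imply $x\in A$. The interior $A^\circ$ is the union of all open subsets of $A$. A cone is a nonempty closed $K\subseteq Y$ with $\lambda K\subseteq K$ ($\lambda\ge0$), $K+K\subseteq K$, $K\cap(-K)=\{0\}$; it is solid if $K\neq\{0\}$ and $K^\circ\ne\emptyset$. A vector ordering is a partial order $\preceq$ on $Y$ with (V1) $x\preceq y\Rightarrow x+z\preceq y+z$; (V2) $\lambda\ge0$, $x\preceq y\Rightarrow \lambda x\preceq\lambda y$; (V3) $x_n\to x$, $y_n\to y$, $x_n\preceq y_n$ for all $n$ $\Rightarrow x\preceq y$. A solid vector space is such a $(Y,\preceq,\to)$ whose positive cone $K=\{x:x\succeq0\}$ is solid, equipped with $x\prec y$ iff $y-x\in K^\circ$. Cone metric space over $Y$: a nonempty set $X$ with $d\colon X\times X\to Y$ such that $d(x,y)\succeq 0$, $d(x,y)=0$ iff $x=y$, $d(x,y)=d(y,x)$, and $d(x,y)\preceq d(x,z)+d(z,y)$.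 The open balls $U(x,r)=\{y\in X:d(y,x)\prec r\}$ ($r\succ0$) form a basis of a topology on $X$ (the cone metric topology), with which $X$ is endowed; thus $x_n\to x$ in $X$ iff for every $c\succ0$, $d(x_n,x)\prec c$ for all but finitely many $n$. Closed ball: $\overline U(x,r)=\{y\in X: d(y,x)\preceq r\}$ for $r\succeq0$. A sequence $(x_n)$ is Cauchy if for every $c\succ0$ there is $N$ with $d(x_n,x_m)\prec c$ for all $n,m>N$; $X$ is complete if every Cauchy sequence converges. Convention: $0^0=1$. *)

theory Defs
  imports Complex_Main
begin

definition vsc :: "((nat \<Rightarrow> 'y::real_vector) \<Rightarrow> 'y \<Rightarrow> bool) \<Rightarrow> bool" where
  "vsc cv \<longleftrightarrow>
     (\<forall>xs ys x y. cv xs x \<and> cv ys y \<longrightarrow> cv (\<lambda>n. xs n + ys n) (x + y)) \<and>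
     (\<forall>xs x (c::real). cv xs x \<longrightarrow> cv (\<lambda>n. c *\<^sub>R xs n) (c *\<^sub>R x)) \<and>
     (\<forall>(ls::nat \<Rightarrow> real) l x. ls \<longlonglongrightarrow> l \<longrightarrow> cv (\<lambda>n. ls n *\<^sub>R x) (l *\<^sub>R x))"

definition c_open :: "((nat \<Rightarrow> 'y::real_vector) \<Rightarrow> 'y \<Rightarrow> bool) \<Rightarrow> 'y set \<Rightarrow> bool" where
  "c_open cv A \<longleftrightarrow> (\<forall>xs x. cv xs x \<and> x \<in> A \<longrightarrow> (\<forall>\<^sub>F n in sequentially. xs n \<in> A))"

definition c_closed :: "((nat \<Rightarrow> 'y::real_vector) \<Rightarrow> 'y \<Rightarrow> bool) \<Rightarrow> 'y set \<Rightarrow> bool" where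
  "c_closed cv A \<longleftrightarrow> (\<forall>xs x. cv xs x \<and> (\<forall>n. xs n \<in> A) \<longrightarrow> x \<in> A)"

definition c_interior :: "((nat \<Rightarrow> 'y::real_vector) \<Rightarrow> 'y \<Rightarrow> bool) \<Rightarrow> 'y set \<Rightarrow> 'y set" where
  "c_interior cv A = \<Union>{U. U \<subseteq> A \<and> c_open cv U}"

definition c_cone :: "((nat \<Rightarrow> 'y::real_vector) \<Rightarrow> 'y \<Rightarrow> bool) \<Rightarrow> 'y set \<Rightarrow> bool" where
  "c_cone cv K \<longleftrightarrow> K \<noteq> {} \<and> c_closed cv K \<and>
     (\<forall>(c::real) x. c \<ge> 0 \<and> x \<in> K \<longrightarrow> c *\<^sub>R x \<in> K) \<and>
     (\<forall>x y. x \<in> K \<and> y \<in> K \<longrightarrow> x + y \<in> K) \<and>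
     K \<inter> uminus ` K = {0}"

definition c_solid_cone :: "((nat \<Rightarrow> 'y::real_vector) \<Rightarrow> 'y \<Rightarrow> bool) \<Rightarrow> 'y set \<Rightarrow> bool" where
  "c_solid_cone cv K \<longleftrightarrow> c_cone cv K \<and> K \<noteq> {0} \<and> c_interior cv K \<noteq> {}"

definition vector_ordering ::
  "((nat \<Rightarrow> 'y::real_vector) \<Rightarrow> 'y \<Rightarrow> bool) \<Rightarrow> ('y \<Rightarrow> 'y \<Rightarrow> bool) \<Rightarrow> bool" where
  "vector_ordering cv le \<longleftrightarrow>
     (\<forall>x. le x x) \<and> (\<forall>x y. le x y \<and> le y x \<longrightarrow> x = y) \<and>
     (\<forall>x y z. le x y \<and> le y z \<longrightarrow> le x z) \<and>
     (\<forall>x y z. le x y \<longrightarrow> le (x + z) (y + z)) \<and>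
     (\<forall>(c::real) x y. c \<ge> 0 \<and> le x y \<longrightarrow> le (c *\<^sub>R x) (c *\<^sub>R y)) \<and>
     (\<forall>xs ys x y. cv xs x \<and> cv ys y \<and> (\<forall>n. le (xs n) (ys n)) \<longrightarrow> le x y)"

definition solid_vector_space ::
  "((nat \<Rightarrow> 'y::real_vector) \<Rightarrow> 'y \<Rightarrow> bool) \<Rightarrow> ('y \<Rightarrow> 'y \<Rightarrow> bool) \<Rightarrow> bool" where
  "solid_vector_space cv le \<longleftrightarrow> vsc cv \<and> vector_ordering cv le \<and> c_solid_cone cv {x. le 0 x}"

definition sv_less ::
  "((nat \<Rightarrow> 'y::real_vector) \<Rightarrow> 'y \<Rightarrow> bool) \<Rightarrow> ('y \<Rightarrow> 'y \<Rightarrow> bool) \<Rightarrow> 'y \<Rightarrow> 'y \<Rightarrow> bool" where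
  "sv_less cv le x y \<longleftrightarrow> y - x \<in> c_interior cv {z. le 0 z}"

definition cone_metric_space ::
  "((nat \<Rightarrow> 'y::real_vector) \<Rightarrow> 'y \<Rightarrow> bool) \<Rightarrow> ('y \<Rightarrow> 'y \<Rightarrow> bool) \<Rightarrow> 'a set \<Rightarrow> ('a \<Rightarrow> 'a \<Rightarrow> 'y) \<Rightarrow> bool" where
  "cone_metric_space cv le X d \<longleftrightarrow> X \<noteq> {} \<and>
     (\<forall>x\<in>X. \<forall>y\<in>X. le 0 (d x y) \<and> (d x y = 0 \<longleftrightarrow> x = y) \<and> d x y = d y x \<and>
        (\<forall>z\<in>X. le (d x y) (d x z + d z y)))"

definition cm_ball ::
  "((nat \<Rightarrow> 'y::real_vector) \<Rightarrow> 'y \<Rightarrow> bool) \<Rightarrow> ('y \<Rightarrow> 'y \<Rightarrow> bool) \<Rightarrow> 'a set \<Rightarrow> ('a \<Rightarrow> 'a \<Rightarrow> 'y) \<Rightarrow> 'a \<Rightarrow> 'y \<Rightarrow> 'a set" where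
  "cm_ball cv le X d x r = {y \<in> X. sv_less cv le (d y x) r}"

definition cm_cball ::
  "('y::real_vector \<Rightarrow> 'y \<Rightarrow> bool) \<Rightarrow> 'a set \<Rightarrow> ('a \<Rightarrow> 'a \<Rightarrow> 'y) \<Rightarrow> 'a \<Rightarrow> 'y \<Rightarrow> 'a set" where
  "cm_cball le X d x r = {y \<in> X. le (d y x) r}"

definition cm_open ::
  "((nat \<Rightarrow> 'y::real_vector) \<Rightarrow> 'y \<Rightarrow> bool) \<Rightarrow> ('y \<Rightarrow> 'y \<Rightarrow> bool) \<Rightarrow> 'a set \<Rightarrow> ('a \<Rightarrow> 'a \<Rightarrow> 'y) \<Rightarrow> 'a set \<Rightarrow> bool" where
  "cm_open cv le X d U \<longleftrightarrow> U \<subseteq> X \<and>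
     (\<forall>x\<in>U. \<exists>y\<in>X. \<exists>r. sv_less cv le 0 r \<and> x \<in> cm_ball cv le X d y r \<and> cm_ball cv le X d y r \<subseteq> U)"

definition cm_tendsto ::
  "((nat \<Rightarrow> 'y::real_vector) \<Rightarrow> 'y \<Rightarrow> bool) \<Rightarrow> ('y \<Rightarrow> 'y \<Rightarrow> bool) \<Rightarrow> 'a set \<Rightarrow> ('a \<Rightarrow> 'a \<Rightarrow> 'y) \<Rightarrow> (nat \<Rightarrow> 'a) \<Rightarrow> 'a \<Rightarrow> bool" where
  "cm_tendsto cv le X d xs x \<longleftrightarrow> x \<in> X \<and> (\<forall>n. xs n \<in> X) \<and>
     (\<forall>c. sv_less cv le 0 c \<longrightarrow> (\<forall>\<^sub>F n in sequentially. sv_less cv le (d (xs n) x) c))"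

definition cm_Cauchy ::
  "((nat \<Rightarrow> 'y::real_vector) \<Rightarrow> 'y \<Rightarrow> bool) \<Rightarrow> ('y \<Rightarrow> 'y \<Rightarrow> bool) \<Rightarrow> 'a set \<Rightarrow> ('a \<Rightarrow> 'a \<Rightarrow> 'y) \<Rightarrow> (nat \<Rightarrow> 'a) \<Rightarrow> bool" where
  "cm_Cauchy cv le X d xs \<longleftrightarrow> (\<forall>n. xs n \<in> X) \<and>
     (\<forall>c. sv_less cv le 0 c \<longrightarrow> (\<exists>N. \<forall>n m. n > N \<and> m > N \<longrightarrow> sv_less cv le (d (xs n) (xs m)) c))"

definition cm_complete ::
  "((nat \<Rightarrow> 'y::real_vector) \<Rightarrow> 'y \<Rightarrow> bool) \<Rightarrow> ('y \<Rightarrow> 'y \<Rightarrow> bool) \<Rightarrow> 'a set \<Rightarrow> ('a \<Rightarrow> 'a \<Rightarrow> 'y) \<Rightarrow> bool" where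
  "cm_complete cv le X d \<longleftrightarrow> (\<forall>xs. cm_Cauchy cv le X d xs \<longrightarrow> (\<exists>x. cm_tendsto cv le X d xs x))"

definition cm_continuous_at ::
  "((nat \<Rightarrow> 'y::real_vector) \<Rightarrow> 'y \<Rightarrow> bool) \<Rightarrow> ('y \<Rightarrow> 'y \<Rightarrow> bool) \<Rightarrow> 'a set \<Rightarrow> ('a \<Rightarrow> 'a \<Rightarrow> 'y) \<Rightarrow> 'a set \<Rightarrow> ('a \<Rightarrow> 'a) \<Rightarrow> 'a \<Rightarrow> bool" where
  "cm_continuous_at cv le X d D T p \<longleftrightarrow>
     (\<forall>V. cm_open cv le X d V \<and> T p \<in> V \<longrightarrow>
        (\<exists>U. cm_open cv le X d U \<and> p \<in> U \<and> (\<forall>x \<in> U \<inter> D. T x \<in> V)))"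

text \<open>Closed graph: {(x, T x). x \<in> D} is closed in D \<times> X (product of subspace topology on D
  and the cone metric topology on X), i.e. its complement in D \<times> X is open there.\<close>
definition cm_closed_graph ::
  "((nat \<Rightarrow> 'y::real_vector) \<Rightarrow> 'y \<Rightarrow> bool) \<Rightarrow> ('y \<Rightarrow> 'y \<Rightarrow> bool) \<Rightarrow> 'a set \<Rightarrow> ('a \<Rightarrow> 'a \<Rightarrow> 'y) \<Rightarrow> 'a set \<Rightarrow> ('a \<Rightarrow> 'a) \<Rightarrow> bool" where
  "cm_closed_graph cv le X d D T \<longleftrightarrow>
     (\<forall>x\<in>D. \<forall>y\<in>X. y \<noteq> T x \<longrightarrow>
        (\<exists>U V. cm_open cv le X d U \<and> cm_open cv le X d V \<and> x \<in> U \<and> y \<in> V \<and>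
           (\<forall>x'\<in>U \<inter> D. \<forall>y'\<in>V. y' \<noteq> T x')))"

end

theory Submission
  imports Defs
begin

text \<open>
  Condition (a) makes the steps d(x_n, x_{n+1}) decay geometrically, so the triangle inequality
  gives d(x_n, x_{n+j}) \<preceq> (1 - \<lambda>^j)/(1 - \<lambda>) d(x_n, x_{n+1}) for as long as the iterates are
  defined. For n = 0 this keeps every iterate in the ball of (b), hence in D; for general n it
  makes the iteration Cauchy. The estimate survives the passage to the limit because the ordering
  is closed under convergence and a \<preceq> b + c for all c \<succ> 0 already forces a \<preceq> b; this yields
  (ii) and (iii). Under (F1) or (F2) the sequence T x_n = x_{n+1} also converges to T \<xi>, and
  limits in a cone metric space are unique.
\<close>

locale solid_space =
  fixes cv :: "(nat \<Rightarrow> 'y::real_vector) \<Rightarrow> 'y \<Rightarrow> bool" and le :: "'y \<Rightarrow> 'y \<Rightarrow> bool"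
  assumes solid: "solid_vector_space cv le"
begin

abbreviation int_cone :: "'y set" where
  "int_cone \<equiv> c_interior cv {z. le 0 z}"

lemma cv_add: "cv xs x \<Longrightarrow> cv ys y \<Longrightarrow> cv (\<lambda>n. xs n + ys n) (x + y)"
  using solid unfolding solid_vector_space_def vsc_def by blast

lemma cv_scaleR: "cv xs x \<Longrightarrow> cv (\<lambda>n. c *\<^sub>R xs n) (c *\<^sub>R x)"
  using solid unfolding solid_vector_space_def vsc_def by blast

lemma cv_scaleR_left: "ls \<longlonglongrightarrow> l \<Longrightarrow> cv (\<lambda>n. ls n *\<^sub>R x) (l *\<^sub>R x)"
  using solid unfolding solid_vector_space_def vsc_def by blast

lemma cv_const: "cv (\<lambda>n. x) x"
  using cv_scaleR_left[of "\<lambda>n. 1" 1 x] by simp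

lemma le_refl: "le x x"
  using solid unfolding solid_vector_space_def vector_ordering_def by blast

lemma le_antisym: "le x y \<Longrightarrow> le y x \<Longrightarrow> x = y"
  using solid unfolding solid_vector_space_def vector_ordering_def by blast

lemma le_trans [trans]: "le x y \<Longrightarrow> le y z \<Longrightarrow> le x z"
  using solid unfolding solid_vector_space_def vector_ordering_def by blast

lemma le_add_right: "le x y \<Longrightarrow> le (x + z) (y + z)"
  using solid unfolding solid_vector_space_def vector_ordering_def by blast

lemma le_scaleR: "0 \<le> c \<Longrightarrow> le x y \<Longrightarrow> le (c *\<^sub>R x) (c *\<^sub>R y)"
  using solid unfolding solid_vector_space_def vector_ordering_def by blast

lemma le_cv_limits: "cv xs x \<Longrightarrow> cv ys y \<Longrightarrow> (\<And>n. le (xs n) (ys n)) \<Longrightarrow> le x y"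
  using solid unfolding solid_vector_space_def vector_ordering_def by blast

lemma le_iff_diff_nonneg: "le x y \<longleftrightarrow> le 0 (y - x)"
  using le_add_right[of x y "- x"] le_add_right[of 0 "y - x" x] by auto

lemma le_add_mono: "le a b \<Longrightarrow> le c e \<Longrightarrow> le (a + c) (b + e)"
  using le_add_right[of a b c] le_add_right[of c e b] le_trans by (simp add: add.commute)

lemma le_sum_mono: "(\<And>i. i \<in> A \<Longrightarrow> le (f i) (g i)) \<Longrightarrow> le (sum f A) (sum g A)"
proof (induction A rule: infinite_finite_induct)
  case (insert i A)
  then show ?case by (simp add: le_add_mono)
qed (simp_all add: le_refl)

lemma le_scaleR_left: "le 0 e \<Longrightarrow> a \<le> b \<Longrightarrow> le (a *\<^sub>R e) (b *\<^sub>R e)"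
  using le_scaleR[of "b - a" 0 e] le_iff_diff_nonneg by (simp add: algebra_simps)

lemma le_geometric:
  assumes "0 \<le> lam" and step: "\<And>i. i < m \<Longrightarrow> le (e (Suc i)) (lam *\<^sub>R e i)"
  shows "le (e m) (lam ^ m *\<^sub>R e 0)"
  using step
proof (induction m)
  case (Suc m)
  have "le (e (Suc m)) (lam *\<^sub>R e m)" using Suc.prems by simp
  also have "le \<dots> (lam *\<^sub>R (lam ^ m *\<^sub>R e 0))"
    using Suc \<open>0 \<le> lam\<close> by (intro le_scaleR) simp_all
  finally show ?case by simp
qed (simp add: le_refl)

lemma int_cone_nonempty: "int_cone \<noteq> {}"
  using solid unfolding solid_vector_space_def c_solid_cone_def by blast

lemma int_cone_nonneg: "z \<in> int_cone \<Longrightarrow> le 0 z"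
  unfolding c_interior_def by blast

lemma int_cone_open: "c_open cv int_cone"
  unfolding c_open_def
proof (intro allI impI)
  fix xs x assume h: "cv xs x \<and> x \<in> int_cone"
  then obtain U where U: "x \<in> U" "U \<subseteq> {z. le 0 z}" "c_open cv U"
    unfolding c_interior_def by blast
  then have "\<forall>\<^sub>F n in sequentially. xs n \<in> U" using h unfolding c_open_def by blast
  then show "\<forall>\<^sub>F n in sequentially. xs n \<in> int_cone"
    by (rule eventually_mono) (use U in \<open>auto simp: c_interior_def\<close>)
qed

lemma int_cone_add_nonneg:
  assumes a: "a \<in> int_cone" and b: "le 0 b"
  shows "a + b \<in> int_cone"
proof -
  let ?U = "(\<lambda>z. z + b) ` int_cone"
  have "?U \<subseteq> {z. le 0 z}"
  proof
    fix w assume "w \<in> ?U"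
    then obtain z where z: "z \<in> int_cone" "w = z + b" by blast
    have "le (0 + b) (z + b)" using int_cone_nonneg z le_add_right by blast
    then show "w \<in> {z. le 0 z}" using b le_trans z by auto
  qed
  moreover have "c_open cv ?U"
    unfolding c_open_def
  proof (intro allI impI)
    fix xs x assume h: "cv xs x \<and> x \<in> ?U"
    then obtain z where z: "z \<in> int_cone" "x = z + b" by blast
    have "cv (\<lambda>n. xs n + - b) (x + - b)" using h cv_const cv_add by blast
    then have "\<forall>\<^sub>F n in sequentially. xs n + - b \<in> int_cone"
      using int_cone_open z unfolding c_open_def by auto
    then show "\<forall>\<^sub>F n in sequentially. xs n \<in> ?U"
      by (rule eventually_mono) (metis add.commute add_minus_cancel image_eqI)
  qed
  ultimately show ?thesis using a unfolding c_interior_def by blast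
qed

lemma int_cone_scaleR:
  assumes c: "0 < c" and a: "a \<in> int_cone"
  shows "c *\<^sub>R a \<in> int_cone"
proof -
  let ?U = "(\<lambda>z. c *\<^sub>R z) ` int_cone"
  have "?U \<subseteq> {z. le 0 z}"
    using int_cone_nonneg le_scaleR[of c 0] c by fastforce
  moreover have "c_open cv ?U"
    unfolding c_open_def
  proof (intro allI impI)
    fix xs x assume h: "cv xs x \<and> x \<in> ?U"
    then obtain z where z: "z \<in> int_cone" "x = c *\<^sub>R z" by blast
    have "cv (\<lambda>n. (1 / c) *\<^sub>R xs n) z" using h cv_scaleR[of xs x "1 / c"] z c by simp
    then have "\<forall>\<^sub>F n in sequentially. (1 / c) *\<^sub>R xs n \<in> int_cone"
      using int_cone_open z unfolding c_open_def by auto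
    then show "\<forall>\<^sub>F n in sequentially. xs n \<in> ?U"
    proof (rule eventually_mono)
      fix n assume "(1 / c) *\<^sub>R xs n \<in> int_cone"
      moreover have "xs n = c *\<^sub>R ((1 / c) *\<^sub>R xs n)" using c by simp
      ultimately show "xs n \<in> ?U" by blast
    qed
  qed
  ultimately show ?thesis using a unfolding c_interior_def by blast
qed

lemma eventually_int_cone_minus_power:
  assumes a: "a \<in> int_cone" and lam: "0 \<le> lam" "lam < (1::real)"
  shows "\<forall>\<^sub>F n in sequentially. a - lam ^ n *\<^sub>R v \<in> int_cone"
proof -
  have "(\<lambda>n. - (lam ^ n)) \<longlonglongrightarrow> - 0"
    by (intro tendsto_minus LIMSEQ_power_zero) (use lam in auto)
  then have "cv (\<lambda>n. a + (- (lam ^ n)) *\<^sub>R v) (a + (- 0) *\<^sub>R v)"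
    using cv_scaleR_left cv_const cv_add by blast
  then have "\<forall>\<^sub>F n in sequentially. a + (- (lam ^ n)) *\<^sub>R v \<in> int_cone"
    using int_cone_open a unfolding c_open_def by auto
  then show ?thesis by (rule eventually_mono) simp
qed

lemma le_if_le_add_int_cone:
  assumes h: "\<And>c. c \<in> int_cone \<Longrightarrow> le a (b + c)"
  shows "le a b"
proof -
  obtain c0 where c0: "c0 \<in> int_cone" using int_cone_nonempty by blast
  have "cv (\<lambda>k. inverse (real (Suc k)) *\<^sub>R c0) (0 *\<^sub>R c0)"
    by (rule cv_scaleR_left[OF LIMSEQ_inverse_real_of_nat])
  then have "cv (\<lambda>k. b + inverse (real (Suc k)) *\<^sub>R c0) (b + 0 *\<^sub>R c0)"
    using cv_const cv_add by blast
  then have "le a (b + 0 *\<^sub>R c0)"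
    by (rule le_cv_limits[OF cv_const]) (intro h int_cone_scaleR c0, simp)
  then show ?thesis by simp
qed

lemma le_int_cone_trans: "le x y \<Longrightarrow> z - y \<in> int_cone \<Longrightarrow> z - x \<in> int_cone"
  using int_cone_add_nonneg[of "z - y" "y - x"] le_iff_diff_nonneg by (simp add: algebra_simps)

lemma le_if_int_cone: "z - y \<in> int_cone \<Longrightarrow> le y z"
  using int_cone_nonneg le_iff_diff_nonneg by blast

end

locale cone_metric = solid_space cv le
  for cv :: "(nat \<Rightarrow> 'y::real_vector) \<Rightarrow> 'y \<Rightarrow> bool" and le +
  fixes X :: "'a set" and d :: "'a \<Rightarrow> 'a \<Rightarrow> 'y"
  assumes cone_metric: "cone_metric_space cv le X d"
begin

lemma dist_nonneg: "p \<in> X \<Longrightarrow> q \<in> X \<Longrightarrow> le 0 (d p q)"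
  using cone_metric unfolding cone_metric_space_def by blast

lemma dist_eq_0_iff: "p \<in> X \<Longrightarrow> q \<in> X \<Longrightarrow> d p q = 0 \<longleftrightarrow> p = q"
  using cone_metric unfolding cone_metric_space_def by blast

lemma dist_commute: "p \<in> X \<Longrightarrow> q \<in> X \<Longrightarrow> d p q = d q p"
  using cone_metric unfolding cone_metric_space_def by blast

lemma dist_triangle: "p \<in> X \<Longrightarrow> q \<in> X \<Longrightarrow> z \<in> X \<Longrightarrow> le (d p q) (d p z + d z q)"
  using cone_metric unfolding cone_metric_space_def by blast

lemma dist_le_sum_steps:
  assumes "\<And>i. i \<le> k \<Longrightarrow> p i \<in> X"
  shows "le (d (p 0) (p k)) (\<Sum>i<k. d (p i) (p (Suc i)))"
  using assms
proof (induction k)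
  case 0
  then have "d (p 0) (p 0) = 0" using dist_eq_0_iff by blast
  then show ?case using le_refl by simp
next
  case (Suc k)
  have "le (d (p 0) (p (Suc k))) (d (p 0) (p k) + d (p k) (p (Suc k)))"
    using Suc.prems dist_triangle by simp
  also have "le \<dots> ((\<Sum>i<k. d (p i) (p (Suc i))) + d (p k) (p (Suc k)))"
    using Suc le_add_mono le_refl by simp
  finally show ?case by simp
qed

lemma dist_le_geometric_sum:
  assumes lam: "0 \<le> lam" "lam < 1"
    and X: "\<And>i. i \<le> k \<Longrightarrow> p i \<in> X"
    and step: "\<And>i. Suc i < k \<Longrightarrow>
      le (d (p (Suc i)) (p (Suc (Suc i)))) (lam *\<^sub>R d (p i) (p (Suc i)))"
  shows "le (d (p 0) (p k)) (((1 - lam ^ k) / (1 - lam)) *\<^sub>R d (p 0) (p 1))"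
proof -
  have "le (d (p 0) (p k)) (\<Sum>i<k. d (p i) (p (Suc i)))"
    using X by (rule dist_le_sum_steps)
  also have "le \<dots> (\<Sum>i<k. lam ^ i *\<^sub>R d (p 0) (p 1))"
    using le_geometric[OF lam(1), where e = "\<lambda>i. d (p i) (p (Suc i))"] step
    by (intro le_sum_mono) simp
  also have "\<dots> = ((1 - lam ^ k) / (1 - lam)) *\<^sub>R d (p 0) (p 1)"
    using lam by (simp add: scaleR_sum_left[symmetric] sum_gp_strict)
  finally show ?thesis .
qed

lemma cm_ball_open:
  assumes "p \<in> X" "c \<in> int_cone"
  shows "cm_open cv le X d (cm_ball cv le X d p c)"
  using assms unfolding cm_open_def sv_less_def by (auto simp: cm_ball_def)

lemma cm_tendsto_eventually_open:
  assumes lim: "cm_tendsto cv le X d xs \<xi>" and U: "cm_open cv le X d U" "\<xi> \<in> U"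
  shows "\<forall>\<^sub>F n in sequentially. xs n \<in> U"
proof -
  obtain y c where y: "y \<in> X" "\<xi> \<in> cm_ball cv le X d y c" "cm_ball cv le X d y c \<subseteq> U"
    using U unfolding cm_open_def by blast
  have "c - d \<xi> y \<in> int_cone" using y unfolding cm_ball_def sv_less_def by blast
  then have "\<forall>\<^sub>F n in sequentially. (c - d \<xi> y) - d (xs n) \<xi> \<in> int_cone"
    using lim unfolding cm_tendsto_def sv_less_def by simp
  then show ?thesis
  proof (rule eventually_mono)
    fix n assume h: "(c - d \<xi> y) - d (xs n) \<xi> \<in> int_cone"
    have "xs n \<in> X" "\<xi> \<in> X" using lim unfolding cm_tendsto_def by auto
    then have "le (d (xs n) y) (d (xs n) \<xi> + d \<xi> y)" using dist_triangle y by blast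
    then have "c - d (xs n) y \<in> int_cone"
      using le_int_cone_trans h by (simp add: algebra_simps)
    then show "xs n \<in> U" using y \<open>xs n \<in> X\<close> unfolding cm_ball_def sv_less_def by auto
  qed
qed

lemma cm_tendsto_Suc:
  "cm_tendsto cv le X d xs \<xi> \<Longrightarrow> cm_tendsto cv le X d (\<lambda>n. xs (Suc n)) \<xi>"
  using eventually_sequentially_Suc[of "\<lambda>n. sv_less cv le (d (xs n) \<xi>) c" for c]
  unfolding cm_tendsto_def by simp

lemma cm_tendsto_unique:
  assumes a: "cm_tendsto cv le X d xs a" and b: "cm_tendsto cv le X d xs b"
  shows "a = b"
proof -
  have X: "a \<in> X" "b \<in> X" "\<And>n. xs n \<in> X" using a b unfolding cm_tendsto_def by auto
  have "le (d a b) (0 + c)" if c: "c \<in> int_cone" for c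
  proof -
    have "\<forall>\<^sub>F n in sequentially. sv_less cv le (d (xs n) a) ((1 / 2) *\<^sub>R c)
        \<and> sv_less cv le (d (xs n) b) ((1 / 2) *\<^sub>R c)"
      using a b int_cone_scaleR[of "1 / 2", OF _ c] unfolding cm_tendsto_def sv_less_def
      by (auto intro: eventually_conj)
    then obtain n where n: "sv_less cv le (d (xs n) a) ((1 / 2) *\<^sub>R c)"
        "sv_less cv le (d (xs n) b) ((1 / 2) *\<^sub>R c)"
      using eventually_happens'[OF sequentially_bot] by blast
    have "le (d a b) (d a (xs n) + d (xs n) b)" using dist_triangle X by blast
    also have "le \<dots> ((1 / 2) *\<^sub>R c + (1 / 2) *\<^sub>R c)"
      using n le_add_mono le_if_int_cone dist_commute X unfolding sv_less_def by metis
    also have "\<dots> = 0 + c" by (simp flip: scaleR_left_distrib)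
    finally show ?thesis .
  qed
  then have "le (d a b) 0" by (rule le_if_le_add_int_cone)
  then show ?thesis using le_antisym dist_nonneg dist_eq_0_iff X by blast
qed

lemma dist_le_if_tendsto:
  assumes lim: "cm_tendsto cv le X d xs \<xi>" and p: "p \<in> X"
    and bound: "\<forall>\<^sub>F n in sequentially. le (d p (xs n)) b"
  shows "le (d p \<xi>) b"
proof (rule le_if_le_add_int_cone)
  fix c assume "c \<in> int_cone"
  then have "\<forall>\<^sub>F n in sequentially. c - d (xs n) \<xi> \<in> int_cone \<and> le (d p (xs n)) b"
    using lim bound unfolding cm_tendsto_def sv_less_def by (auto intro: eventually_conj)
  then obtain n where n: "c - d (xs n) \<xi> \<in> int_cone" "le (d p (xs n)) b"
    using eventually_happens'[OF sequentially_bot] by blast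
  have "xs n \<in> X" "\<xi> \<in> X" using lim unfolding cm_tendsto_def by auto
  then have "le (d p \<xi>) (d p (xs n) + d (xs n) \<xi>)" using dist_triangle p by blast
  also have "le \<dots> (b + c)" using n le_add_mono le_if_int_cone by blast
  finally show "le (d p \<xi>) (b + c)" .
qed

lemma cm_tendsto_image_if_continuous_at:
  assumes cont: "cm_continuous_at cv le X d D T \<xi>" and TX: "T \<xi> \<in> X" "\<And>n. T (xs n) \<in> X"
    and lim: "cm_tendsto cv le X d xs \<xi>" and D: "\<And>n. xs n \<in> D"
  shows "cm_tendsto cv le X d (\<lambda>n. T (xs n)) (T \<xi>)"
  unfolding cm_tendsto_def
proof (intro conjI allI impI TX)
  fix c assume "sv_less cv le 0 c"
  then have c: "c \<in> int_cone" unfolding sv_less_def by simp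
  have "T \<xi> \<in> cm_ball cv le X d (T \<xi>) c"
    using TX c dist_eq_0_iff[OF TX(1) TX(1)] unfolding cm_ball_def sv_less_def by simp
  then obtain U where U: "cm_open cv le X d U" "\<xi> \<in> U"
      "\<forall>z \<in> U \<inter> D. T z \<in> cm_ball cv le X d (T \<xi>) c"
    using cont cm_ball_open[OF TX(1) c] unfolding cm_continuous_at_def by blast
  show "\<forall>\<^sub>F n in sequentially. sv_less cv le (d (T (xs n)) (T \<xi>)) c"
    using cm_tendsto_eventually_open[OF lim U(1,2)]
    by (rule eventually_mono) (use U(3) D in \<open>auto simp: cm_ball_def\<close>)
qed

lemma closed_graph_tendsto_eq:
  assumes graph: "cm_closed_graph cv le X d D T" and "\<xi> \<in> D"
    and lim: "cm_tendsto cv le X d xs \<xi>" and D: "\<And>n. xs n \<in> D"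
    and lim_T: "cm_tendsto cv le X d (\<lambda>n. T (xs n)) \<eta>"
  shows "\<eta> = T \<xi>"
proof (rule ccontr)
  assume "\<eta> \<noteq> T \<xi>"
  moreover have "\<eta> \<in> X" using lim_T unfolding cm_tendsto_def by blast
  ultimately obtain U V where UV: "cm_open cv le X d U" "cm_open cv le X d V" "\<xi> \<in> U" "\<eta> \<in> V"
      "\<forall>x'\<in>U \<inter> D. \<forall>y'\<in>V. y' \<noteq> T x'"
    using graph \<open>\<xi> \<in> D\<close> unfolding cm_closed_graph_def by blast
  have "\<forall>\<^sub>F n in sequentially. xs n \<in> U \<and> T (xs n) \<in> V"
    using cm_tendsto_eventually_open[OF lim UV(1,3)] cm_tendsto_eventually_open[OF lim_T UV(2,4)]
    by (rule eventually_conj)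
  then obtain n where "xs n \<in> U" "T (xs n) \<in> V" using eventually_happens'[OF sequentially_bot] by blast
  then show False using UV(5) D by blast
qed

lemma fixed_point_of_iteration_limit:
  assumes lim: "cm_tendsto cv le X d xs \<xi>" and "\<xi> \<in> D" and D: "\<And>n. xs n \<in> D"
    and TD: "\<forall>x\<in>D. T x \<in> X" and iter: "\<And>n. xs (Suc n) = T (xs n)"
    and "cm_continuous_at cv le X d D T \<xi> \<or> cm_closed_graph cv le X d D T"
  shows "T \<xi> = \<xi>"
proof -
  have lim_T: "cm_tendsto cv le X d (\<lambda>n. T (xs n)) \<xi>"
    using cm_tendsto_Suc[OF lim] iter by simp
  from assms(6) show ?thesis
  proof
    assume "cm_continuous_at cv le X d D T \<xi>"
    then have "cm_tendsto cv le X d (\<lambda>n. T (xs n)) (T \<xi>)"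
      by (rule cm_tendsto_image_if_continuous_at) (use TD \<open>\<xi> \<in> D\<close> D lim in auto)
    then show ?thesis using cm_tendsto_unique lim_T by blast
  next
    assume "cm_closed_graph cv le X d D T"
    then show ?thesis using closed_graph_tendsto_eq \<open>\<xi> \<in> D\<close> lim D lim_T by metis
  qed
qed

lemma picard_iterates_in_cball:
  assumes DX: "D \<subseteq> X" and TD: "\<forall>x\<in>D. T x \<in> X" and lam: "0 \<le> lam" "lam < 1"
    and a: "\<forall>x\<in>D. T x \<in> D \<longrightarrow> le (d (T x) (T (T x))) (lam *\<^sub>R d x (T x))"
    and x0: "x0 \<in> D"
    and b: "cm_cball le X d x0 ((1 / (1 - lam)) *\<^sub>R d x0 (T x0)) \<subseteq> D"
  shows "(T ^^ n) x0 \<in> cm_cball le X d x0 ((1 / (1 - lam)) *\<^sub>R d x0 (T x0))"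
proof -
  define x where "x n = (T ^^ n) x0" for n
  define r where "r = (1 / (1 - lam)) *\<^sub>R d x0 (T x0)"
  have x_Suc: "x (Suc n) = T (x n)" for n unfolding x_def by simp
  have in_cball: "x k \<in> cm_cball le X d x0 r" if D: "\<And>i. i < k \<Longrightarrow> x i \<in> D" for k
  proof -
    have X: "x i \<in> X" if "i \<le> k" for i
      using that D DX TD x0 x_Suc unfolding x_def
      by (cases i) (auto simp: le_less subsetD simp del: funpow.simps)
    have step: "le (d (x (Suc i)) (x (Suc (Suc i)))) (lam *\<^sub>R d (x i) (x (Suc i)))"
      if "Suc i < k" for i
      using a D[of i] D[of "Suc i"] that x_Suc by simp
    have "le (d x0 (x k)) (((1 - lam ^ k) / (1 - lam)) *\<^sub>R d x0 (T x0))"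
      using dist_le_geometric_sum[OF lam, of k x] X step
      by (simp add: x_Suc x_def[of 0])
    also have "le \<dots> r" unfolding r_def
      using lam x0 DX TD by (intro le_scaleR_left dist_nonneg) (auto simp: divide_right_mono)
    finally show ?thesis
      using X[of k] x0 DX dist_commute unfolding cm_cball_def by auto
  qed
  have "x i \<in> D" if "i < k" for i k
    using that
  proof (induction k arbitrary: i)
    case (Suc k)
    then show ?case using in_cball b r_def by (auto simp: less_Suc_eq)
  qed simp
  then show ?thesis using in_cball unfolding x_def r_def by blast
qed

end

locale contractive_steps = cone_metric cv le X d
  for cv :: "(nat \<Rightarrow> 'y::real_vector) \<Rightarrow> 'y \<Rightarrow> bool" and le X and d :: "'a \<Rightarrow> 'a \<Rightarrow> 'y" +
  fixes xs :: "nat \<Rightarrow> 'a" and lam :: real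
  assumes lam: "0 \<le> lam" "lam < 1"
    and in_X: "xs n \<in> X"
    and step: "le (d (xs (Suc n)) (xs (Suc (Suc n)))) (lam *\<^sub>R d (xs n) (xs (Suc n)))"
begin

lemma step_le_geometric: "le (d (xs n) (xs (Suc n))) (lam ^ n *\<^sub>R d (xs 0) (xs 1))"
  using le_geometric[of lam n "\<lambda>i. d (xs i) (xs (Suc i))"] lam step by simp

lemma dist_shift_le: "le (d (xs n) (xs (n + j))) ((1 / (1 - lam)) *\<^sub>R d (xs n) (xs (Suc n)))"
proof -
  have "le (d (xs n) (xs (n + j))) (((1 - lam ^ j) / (1 - lam)) *\<^sub>R d (xs n) (xs (Suc n)))"
    using dist_le_geometric_sum[OF lam, of j "\<lambda>i. xs (n + i)"] in_X step by simp
  also have "le \<dots> ((1 / (1 - lam)) *\<^sub>R d (xs n) (xs (Suc n)))"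
    using lam by (intro le_scaleR_left dist_nonneg in_X) (simp add: divide_right_mono)
  finally show ?thesis .
qed

lemma dist_le_power: "le (d (xs n) (xs (n + j))) (lam ^ n *\<^sub>R ((1 / (1 - lam)) *\<^sub>R d (xs 0) (xs 1)))"
proof -
  have "le ((1 / (1 - lam)) *\<^sub>R d (xs n) (xs (Suc n)))
      ((1 / (1 - lam)) *\<^sub>R (lam ^ n *\<^sub>R d (xs 0) (xs 1)))"
    using lam step_le_geometric by (intro le_scaleR) auto
  then show ?thesis using le_trans[OF dist_shift_le[of n j]] by simp
qed

lemma Cauchy: "cm_Cauchy cv le X d xs"
  unfolding cm_Cauchy_def
proof (intro conjI allI impI in_X)
  fix c assume "sv_less cv le 0 c"
  then have "c \<in> int_cone" unfolding sv_less_def by simp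
  then obtain N where N: "\<And>n. n \<ge> N \<Longrightarrow>
      c - lam ^ n *\<^sub>R ((1 / (1 - lam)) *\<^sub>R d (xs 0) (xs 1)) \<in> int_cone"
    using eventually_int_cone_minus_power lam unfolding eventually_sequentially by blast
  have close: "c - d (xs n) (xs m) \<in> int_cone" if "N \<le> n" "n \<le> m" for n m
    using le_int_cone_trans[OF dist_le_power N] that by (metis le_add_diff_inverse)
  show "\<exists>N. \<forall>n m. N < n \<and> N < m \<longrightarrow> sv_less cv le (d (xs n) (xs m)) c"
    unfolding sv_less_def
    using close dist_commute in_X by (metis less_imp_le_nat nle_le)
qed

lemma limit_error_bounds:
  assumes lim: "cm_tendsto cv le X d xs \<xi>"
  shows "le (d (xs n) \<xi>) ((1 / (1 - lam)) *\<^sub>R d (xs n) (xs (Suc n)))"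
    and "le (d (xs n) \<xi>) ((lam ^ n / (1 - lam)) *\<^sub>R d (xs 0) (xs 1))"
    and "le (d (xs (Suc n)) \<xi>) ((lam / (1 - lam)) *\<^sub>R d (xs (Suc n)) (xs n))"
proof -
  have posterior: "le (d (xs m) \<xi>) ((1 / (1 - lam)) *\<^sub>R d (xs m) (xs (Suc m)))" for m
    by (intro dist_le_if_tendsto[OF lim in_X] eventually_sequentiallyI[of m])
      (metis dist_shift_le le_add_diff_inverse)
  then show "le (d (xs n) \<xi>) ((1 / (1 - lam)) *\<^sub>R d (xs n) (xs (Suc n)))" .
  show "le (d (xs n) \<xi>) ((lam ^ n / (1 - lam)) *\<^sub>R d (xs 0) (xs 1))"
    by (intro dist_le_if_tendsto[OF lim in_X] eventually_sequentiallyI[of n])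
      (metis dist_le_power le_add_diff_inverse scaleR_scaleR times_divide_eq_right mult_1_right)
  have "le ((1 / (1 - lam)) *\<^sub>R d (xs (Suc n)) (xs (Suc (Suc n))))
      ((1 / (1 - lam)) *\<^sub>R (lam *\<^sub>R d (xs n) (xs (Suc n))))"
    using lam step by (intro le_scaleR) auto
  then show "le (d (xs (Suc n)) \<xi>) ((lam / (1 - lam)) *\<^sub>R d (xs (Suc n)) (xs n))"
    using posterior[of "Suc n"] le_trans dist_commute in_X by simp
qed

end

theorem theorem10p5:
  fixes cv :: "(nat \<Rightarrow> 'y::real_vector) \<Rightarrow> 'y \<Rightarrow> bool"
    and le :: "'y \<Rightarrow> 'y \<Rightarrow> bool"
    and X D :: "'a set" and d :: "'a \<Rightarrow> 'a \<Rightarrow> 'y" and T :: "'a \<Rightarrow> 'a"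
    and lam :: real and x0 :: 'a
  assumes Y: "solid_vector_space cv le"
    and Xcm: "cone_metric_space cv le X d"
    and Xc: "cm_complete cv le X d"
    and DX: "D \<subseteq> X"
    and TD: "\<forall>x\<in>D. T x \<in> X"
    and lam: "0 \<le> lam" "lam < 1"
    and a: "\<forall>x\<in>D. T x \<in> D \<longrightarrow> le (d (T x) (T (T x))) (lam *\<^sub>R d x (T x))"
    and x0: "x0 \<in> D"
    and b: "cm_cball le X d x0 ((1 / (1 - lam)) *\<^sub>R d x0 (T x0)) \<subseteq> D"
  shows "let r = (1 / (1 - lam)) *\<^sub>R d x0 (T x0); x = (\<lambda>n. (T ^^ n) x0) in
    (\<forall>n. x n \<in> D) \<and> (\<forall>n. x n \<in> cm_cball le X d x0 r) \<and>
    (\<exists>\<xi> \<in> cm_cball le X d x0 r.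
       cm_tendsto cv le X d x \<xi> \<and>
       (\<forall>n. le (d (x n) \<xi>) ((lam ^ n / (1 - lam)) *\<^sub>R d x0 (T x0))) \<and>
       (\<forall>n. le (d (x n) \<xi>) ((1 / (1 - lam)) *\<^sub>R d (x n) (x (Suc n)))) \<and>
       (\<forall>n\<ge>1. le (d (x n) \<xi>) ((lam / (1 - lam)) *\<^sub>R d (x n) (x (n - 1)))) \<and>
       ((cm_continuous_at cv le X d D T \<xi> \<or> cm_closed_graph cv le X d D T) \<longrightarrow> T \<xi> = \<xi>))"
proof -
  interpret cone_metric cv le X d using Y Xcm by unfold_locales
  define r where "r = (1 / (1 - lam)) *\<^sub>R d x0 (T x0)"
  define x where "x = (\<lambda>n. (T ^^ n) x0)"
  have x_Suc: "x (Suc n) = T (x n)" and x_01: "x 0 = x0" "x 1 = T x0" for n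
    unfolding x_def by simp_all
  have cball: "x n \<in> cm_cball le X d x0 r" for n
    unfolding x_def r_def by (rule picard_iterates_in_cball[OF DX TD lam a x0 b])
  then have xD: "x n \<in> D" for n using b r_def by blast
  interpret contractive_steps cv le X d x lam
    using lam xD DX a x_Suc xD[of "Suc n" for n] by unfold_locales auto
  obtain \<xi> where lim: "cm_tendsto cv le X d x \<xi>" using Xc Cauchy unfolding cm_complete_def by blast
  have \<xi>_cball: "\<xi> \<in> cm_cball le X d x0 r"
    using limit_error_bounds(2)[OF lim, of 0] dist_commute in_X lim x_01
    unfolding cm_cball_def r_def cm_tendsto_def by auto
  then have \<xi>D: "\<xi> \<in> D" using b r_def by blast
  have fixed: "T \<xi> = \<xi>" if "cm_continuous_at cv le X d D T \<xi> \<or> cm_closed_graph cv le X d D T"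
    using fixed_point_of_iteration_limit[OF lim \<xi>D xD TD x_Suc that] .
  have "le (d (x n) \<xi>) ((lam / (1 - lam)) *\<^sub>R d (x n) (x (n - 1)))" if "n \<ge> 1" for n
    using limit_error_bounds(3)[OF lim, of "n - 1"] that by simp
  then show ?thesis
    unfolding Let_def r_def[symmetric] x_def[symmetric]
    using xD cball \<xi>_cball lim limit_error_bounds(1,2)[OF lim] fixed x_01 by auto
qed

end
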